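(* For all parameter values $\alpha_L,\alpha_R,\mu_L,\mu_R,\gamma_{RL},\gamma_{LR}>0$ (no symmetry assumed), the system \[ \dot L=\alpha_L L C-\mu_L L+\gamma_{RL} R C,\qquad \dot R=\alpha_R R C-\mu_R R+\gamma_{LR} L C,\qquad C=1-L-R, \] has no closed (periodic) orbits in the interior of the simplex $\Sigma=\{(L,R): L\ge0,\ R\ge0,\ L+R\le1\}$. *)

theory Defs
  imports Complex_Main
begin

definition fieldL :: "real \<Rightarrow> real \<Rightarrow> real \<Rightarrow> real \<Rightarrow> real \<Rightarrow> real" where
  "fieldL aL muL gRL L R = aL * L * (1 - L - R) - muL * L + gRL * R * (1 - L - R)"

definition fieldR :: "real \<Rightarrow> real \<Rightarrow> real \<Rightarrow> real \<Rightarrow> real \<Rightarrow> real" where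
  "fieldR aR muR gLR L R = aR * R * (1 - L - R) - muR * R + gLR * L * (1 - L - R)"

definition in_simplex_interior :: "real \<Rightarrow> real \<Rightarrow> bool" where
  "in_simplex_interior L R \<longleftrightarrow> L > 0 \<and> R > 0 \<and> L + R < 1"

definition closed_orbit_in_interior ::
  "real \<Rightarrow> real \<Rightarrow> real \<Rightarrow> real \<Rightarrow> real \<Rightarrow> real \<Rightarrow> (real \<Rightarrow> real) \<Rightarrow> (real \<Rightarrow> real) \<Rightarrow> bool" where
  "closed_orbit_in_interior aL aR muL muR gRL gLR L R \<longleftrightarrow>
     (\<forall>t. (L has_real_derivative fieldL aL muL gRL (L t) (R t)) (at t)) \<and>
     (\<forall>t. (R has_real_derivative fieldR aR muR gLR (L t) (R t)) (at t)) \<and>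
     (\<exists>T>0. \<forall>t. L (t + T) = L t \<and> R (t + T) = R t) \<and>
     (\<exists>t1 t2. (L t1, R t1) \<noteq> (L t2, R t2)) \<and>
     (\<forall>t. in_simplex_interior (L t) (R t))"

end

(*
  In the coordinates x = L / (L + R) and C = 1 - L - R the system becomes
    x' = C q(x) - d x (1 - x),    C' = - (1 - C) (C beta(x) - eta(x)),    d = muL - muR,
  where q(x) = x (1 - x) r(x) with r strictly decreasing; by the symmetry L <-> R we may
  assume d >= 0. On a periodic orbit x and C attain their extrema, where x' = 0 resp. C' = 0.
  Let D = muR (aL + gLR) - muL (aR + gRL).

  If d = 0, the extreme values of x are zeros of r, so x is constant, and then so is C.
  If d > 0 and D < 0, the system is cooperative along the orbit (dx'/dC = q > 0 and
  dC'/dx > 0), so the product x' C' satisfies a linear equation with nonnegative forcing;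
  it vanishes at an extremum of x and is periodic, hence vanishes identically.
  If d > 0 and D >= 0, the nullclines C = phi(x) = d / r(x) and C = psi(x) = eta(x) / beta(x)
  are increasing resp. nonincreasing over the range of x and cross at some level c0; then
  V = - C - (1 - c0) ln (1 - C) + M(x), for a suitable primitive M, is a Lyapunov function
  whose derivative vanishes only where x' = 0, so a periodic orbit is again a single point.
*)
theory Submission
  imports Defs "HOL-Analysis.Analysis"
begin

section \<open>Periodic functions\<close>

lemma periodic_add_nat:
  fixes f :: "real \<Rightarrow> 'a"
  assumes "\<And>t. f (t + T) = f t"
  shows "f (t + real n * T) = f t"
proof (induction n)
  case (Suc n)
  have "f (t + real (Suc n) * T) = f ((t + real n * T) + T)" by (simp add: algebra_simps)
  with assms Suc show ?case by simp
qed simp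

lemma periodic_add_int:
  fixes f :: "real \<Rightarrow> 'a"
  assumes "\<And>t. f (t + T) = f t"
  shows "f (t + real_of_int k * T) = f t"
proof (cases "k \<ge> 0")
  case True
  then show ?thesis using periodic_add_nat[of f T t "nat k"] assms by simp
next
  case False
  have "f ((t + real_of_int k * T) + real (nat (- k)) * T) = f (t + real_of_int k * T)"
    using periodic_add_nat[of f T] assms by blast
  with False show ?thesis by simp
qed

lemma periodic_representative:
  fixes f :: "real \<Rightarrow> 'a"
  assumes "\<And>t. f (t + T) = f t" "T > 0"
  obtains s where "s \<in> {a..a + T}" "f s = f t"
proof
  define k where "k = \<lfloor>(t - a) / T\<rfloor>"
  have "real_of_int k \<le> (t - a) / T" "(t - a) / T \<le> real_of_int k + 1"
    unfolding k_def by linarith+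
  then have "real_of_int k * T \<le> t - a" "t - a \<le> (real_of_int k + 1) * T"
    using assms(2) by (simp_all add: field_simps)
  then show "t + real_of_int (- k) * T \<in> {a..a + T}" by (simp add: algebra_simps)
  show "f (t + real_of_int (- k) * T) = f t" using periodic_add_int[of f T] assms(1) by blast
qed

lemma periodic_attains_max:
  fixes f :: "real \<Rightarrow> real"
  assumes "\<And>t. f (t + T) = f t" "T > 0" "continuous_on UNIV f"
  obtains m where "\<And>t. f t \<le> f m"
proof -
  have "continuous_on {0..T} f" using assms(3) by (rule continuous_on_subset) simp
  moreover have "{0..T} \<noteq> {}" using assms(2) by simp
  ultimately have "\<exists>m\<in>{0..T}. \<forall>s\<in>{0..T}. f s \<le> f m"
    by (intro continuous_attains_sup compact_Icc)
  then obtain m where m: "\<forall>s\<in>{0..T}. f s \<le> f m" by blast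
  have "f t \<le> f m" for t
  proof -
    obtain s where s: "s \<in> {0..T}" "f s = f t"
      by (rule periodic_representative[of f T 0 t]) (use assms(1,2) in auto)
    from m s(1) have "f s \<le> f m" by (rule bspec)
    with s(2) show ?thesis by simp
  qed
  then show thesis by (rule that)
qed

lemma periodic_deriv_zero_at_max:
  fixes f :: "real \<Rightarrow> real"
  assumes "\<And>t. f (t + T) = f t" "T > 0" "\<And>t. (f has_real_derivative f' t) (at t)"
  obtains m where "\<And>t. f t \<le> f m" "f' m = 0"
proof -
  have "continuous_on UNIV f"
    using assms(3) DERIV_isCont continuous_at_imp_continuous_on by blast
  then obtain m where max: "\<And>t. f t \<le> f m" using periodic_attains_max assms(1,2) by blast
  moreover have "f' m = 0" using DERIV_local_max[OF assms(3) zero_less_one] max by blast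
  ultimately show thesis by (rule that)
qed

lemma periodic_deriv_zero_at_min:
  fixes f :: "real \<Rightarrow> real"
  assumes "\<And>t. f (t + T) = f t" "T > 0" "\<And>t. (f has_real_derivative f' t) (at t)"
  obtains m where "\<And>t. f m \<le> f t" "f' m = 0"
proof -
  have "\<And>t. - f (t + T) = - f t" using assms(1) by simp
  moreover have "\<And>t. ((\<lambda>t. - f t) has_real_derivative - f' t) (at t)"
    using assms(3) by (rule DERIV_minus)
  ultimately obtain m where "\<And>t. - f t \<le> - f m" "- f' m = 0"
    using periodic_deriv_zero_at_max[of "\<lambda>t. - f t" T "\<lambda>t. - f' t"] assms(2) by blast
  then show thesis using that[of m] by simp
qed

lemma periodic_deriv_nonpos_imp_deriv_zero:
  fixes f :: "real \<Rightarrow> real"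
  assumes "\<And>t. f (t + T) = f t" "T > 0" "\<And>t. (f has_real_derivative f' t) (at t)"
    and "\<And>t. f' t \<le> 0"
  shows "f' t = 0"
proof -
  have le: "f a \<le> f b" for a b
  proof -
    obtain n :: nat where "real n > (b - a) / T" using reals_Archimedean2 by blast
    then have "b \<le> a + real n * T" using assms(2) by (simp add: field_simps)
    then have "f (a + real n * T) \<le> f b"
      using DERIV_nonpos_imp_nonincreasing assms(3,4) by blast
    then show ?thesis using periodic_add_nat[of f T] assms(1) by simp
  qed
  show ?thesis using DERIV_local_max[OF assms(3) zero_less_one] le by blast
qed

text \<open>An integrating factor turns \<open>P' = g P + Q\<close> into \<open>(P e\<^sup>-\<^sup>A)' = Q e\<^sup>-\<^sup>A \<ge> 0\<close>.\<close>
lemma linear_ode_nonneg_forcing_zero: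
  fixes P g Q :: "real \<Rightarrow> real"
  assumes "a \<le> b" "P a = 0" "P b = 0" "continuous_on {a..b} g"
    and "\<And>t. (P has_real_derivative g t * P t + Q t) (at t)" "\<And>t. Q t \<ge> 0"
    and "t \<in> {a..b}"
  shows "P t = 0"
proof -
  define A where "A s = integral {a..s} g" for s
  define Z where "Z s = P s * exp (- A s)" for s
  have dZ: "(Z has_real_derivative Q s * exp (- A s)) (at s within {a..b})" if "s \<in> {a..b}" for s
  proof -
    have "(A has_real_derivative g s) (at s within {a..b})"
      unfolding A_def by (rule integral_has_real_derivative[OF assms(4) that])
    then have "(Z has_real_derivative (g s * P s + Q s) * exp (- A s) + P s * (exp (- A s) * - g s))
        (at s within {a..b})"
      unfolding Z_def using DERIV_subset[OF assms(5)] by (intro derivative_eq_intros) auto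
    then show ?thesis by (simp add: algebra_simps)
  qed
  have cont: "continuous_on {a..b} Z"
    using dZ DERIV_continuous continuous_on_eq_continuous_within by blast
  have incr: "Z u \<le> Z v" if "a \<le> u" "u \<le> v" "v \<le> b" for u v
  proof (rule DERIV_nonneg_imp_increasing_open[OF \<open>u \<le> v\<close>])
    fix s assume "u < s" "s < v"
    then have "at s within {a..b} = at s" using that by (intro at_within_Icc_at) auto
    then show "\<exists>y. (Z has_real_derivative y) (at s) \<and> 0 \<le> y"
      using dZ[of s] assms(6)[of s] \<open>u < s\<close> \<open>s < v\<close> that by auto
  next
    show "continuous_on {u..v} Z" using cont that by (auto intro: continuous_on_subset)
  qed
  have "Z a = 0" "Z b = 0" using assms(2,3) by (simp_all add: Z_def)
  then have "Z t = 0" using incr[of a t] incr[of t b] assms(7) by auto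
  then show ?thesis by (simp add: Z_def)
qed

lemma periodic_linear_ode_nonneg_forcing_zero:
  fixes P g Q :: "real \<Rightarrow> real"
  assumes "\<And>t. P (t + T) = P t" "T > 0" "P a = 0" "continuous_on UNIV g"
    and "\<And>t. (P has_real_derivative g t * P t + Q t) (at t)" "\<And>t. Q t \<ge> 0"
  shows "P t = 0"
proof -
  obtain s where "s \<in> {a..a + T}" "P s = P t"
    using periodic_representative[of P T a t] assms(1,2) by blast
  moreover have "P (a + T) = 0" using assms(1,3) by simp
  moreover have "continuous_on {a..a + T} g" using assms(4) by (rule continuous_on_subset) simp
  ultimately show ?thesis
    using linear_ode_nonneg_forcing_zero[of a "a + T" P g Q s] assms(2,3,5,6) by simp
qed

lemma crossing_of_mono_antimono:
  fixes \<phi> \<psi> :: "real \<Rightarrow> real"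
  assumes "a \<le> b" "continuous_on {a..b} \<phi>" "continuous_on {a..b} \<psi>"
    and "\<And>u v. a \<le> u \<Longrightarrow> u \<le> v \<Longrightarrow> v \<le> b \<Longrightarrow> \<phi> u \<le> \<phi> v"
    and "\<And>u v. a \<le> u \<Longrightarrow> u \<le> v \<Longrightarrow> v \<le> b \<Longrightarrow> \<psi> v \<le> \<psi> u"
    and "\<phi> a \<le> \<psi> a" "\<psi> b \<le> \<phi> b"
  obtains c where "\<And>y. y \<in> {a..b} \<Longrightarrow> (\<phi> y - \<psi> y) * (\<phi> y - c) \<ge> 0"
proof -
  have "continuous_on {a..b} (\<lambda>y. \<phi> y - \<psi> y)" using assms(2,3) by (intro continuous_intros)
  then obtain z where z: "a \<le> z" "z \<le> b" "\<phi> z = \<psi> z"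
    using IVT'[of "\<lambda>y. \<phi> y - \<psi> y" a 0 b] assms(1,6,7) by auto
  have "(\<phi> y - \<psi> y) * (\<phi> y - \<phi> z) \<ge> 0" if "y \<in> {a..b}" for y
  proof (cases "z \<le> y")
    case True
    then have "\<phi> z \<le> \<phi> y" "\<psi> y \<le> \<phi> z" using assms(4,5)[of z y] z that by auto
    then show ?thesis by simp
  next
    case False
    then have "\<phi> y \<le> \<phi> z" "\<phi> z \<le> \<psi> y" using assms(4,5)[of y z] z that by auto
    then show ?thesis by (simp add: mult_nonpos_nonpos)
  qed
  then show thesis by (rule that)
qed

lemma DERIV_integral_comp:
  fixes m u :: "real \<Rightarrow> real"
  assumes "continuous_on {a..b} m" "\<And>s. u s \<in> {a..b}" "(u has_real_derivative u') (at t)"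
  shows "((\<lambda>s. integral {a..u s} m) has_real_derivative m (u t) * u') (at t)"
proof -
  have "((\<lambda>y. integral {a..y} m) has_real_derivative m (u t)) (at (u t) within range u)"
    by (rule has_field_derivative_subset[OF integral_has_real_derivative[OF assms(1,2)]])
      (use assms(2) in blast)
  from DERIV_image_chain[OF this assms(3)] show ?thesis by (simp add: o_def)
qed

section \<open>The system in the coordinates \<open>x = L / (L + R)\<close> and \<open>C = 1 - L - R\<close>\<close>

locale reduced_system =
  fixes aL aR muL muR gRL gLR :: real
  assumes pos: "aL > 0" "aR > 0" "muL > 0" "muR > 0" "gRL > 0" "gLR > 0"
    and mu_le: "muR \<le> muL"
begin

definition "dmu = muL - muR"
definition "q y = gRL * (1 - y)^2 + (aL - aR) * y * (1 - y) - gLR * y^2"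
definition "r y = gRL * (1 - y) / y + (aL - aR) - gLR * y / (1 - y)"
definition "beta y = aR + gRL + (aL + gLR - aR - gRL) * y"
definition "eta y = muR + dmu * y"
definition "D = muR * (aL + gLR) - muL * (aR + gRL)"

definition "Fx y c = c * q y - dmu * y * (1 - y)"
definition "FC y c = - (1 - c) * (c * beta y - eta y)"
definition "Fx_dx y c =
  c * (- 2 * gRL * (1 - y) + (aL - aR) * (1 - 2 * y) - 2 * gLR * y) - dmu * (1 - 2 * y)"
definition "FC_dC y c = (c * beta y - eta y) - (1 - c) * beta y"
definition "FC_dx y c = (1 - c) * (dmu - c * (aL + gLR - aR - gRL))"

definition "phi y = dmu / r y"
definition "psi y = eta y / beta y"

lemma dmu_nonneg: "dmu \<ge> 0"
  using mu_le by (simp add: dmu_def)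

lemma q_eq_r: "0 < y \<Longrightarrow> y < 1 \<Longrightarrow> q y = y * (1 - y) * r y"
  by (simp add: q_def r_def field_simps power2_eq_square)

lemma r_strict_decreasing:
  assumes "0 < a" "a < b" "b < 1"
  shows "r b < r a"
proof -
  have "r a - r b = gRL * ((1 - a) / a - (1 - b) / b) + gLR * (b / (1 - b) - a / (1 - a))"
    unfolding r_def by (simp add: algebra_simps)
  also have "\<dots> = gRL * ((b - a) / (a * b)) + gLR * ((b - a) / ((1 - a) * (1 - b)))"
    using assms by (simp add: field_simps)
  also have "\<dots> = (b - a) * (gRL / (a * b) + gLR / ((1 - a) * (1 - b)))"
    by (simp add: algebra_simps)
  finally have "r a - r b = (b - a) * (gRL / (a * b) + gLR / ((1 - a) * (1 - b)))" .
  moreover have "gRL / (a * b) + gLR / ((1 - a) * (1 - b)) > 0"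
    using assms pos by (intro add_pos_pos) auto
  ultimately have "r a - r b > 0" using assms by simp
  then show ?thesis by simp
qed

lemma r_decreasing: "0 < a \<Longrightarrow> a \<le> b \<Longrightarrow> b < 1 \<Longrightarrow> r b \<le> r a"
  using r_strict_decreasing[of a b] by (cases "a = b") auto

lemma beta_pos:
  assumes "0 \<le> y" "y \<le> 1"
  shows "beta y > 0"
proof -
  have "beta y = (aR + gRL) * (1 - y) + (aL + gLR) * y" by (simp add: beta_def algebra_simps)
  moreover have "(aR + gRL) * (1 - y) + (aL + gLR) * y > 0"
    using assms pos by (cases "y = 1") (auto intro: add_pos_nonneg)
  ultimately show ?thesis by simp
qed

lemma Fx_zero_imp:
  assumes "Fx y c = 0" "0 < y" "y < 1"
  shows "c * r y = dmu"
proof -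
  have "y * (1 - y) * (c * r y - dmu) = 0"
    using assms by (simp add: Fx_def q_eq_r algebra_simps)
  then show ?thesis using assms(2,3) by simp
qed

lemma FC_zero_imp: "FC y c = 0 \<Longrightarrow> c < 1 \<Longrightarrow> c * beta y = eta y"
  by (simp add: FC_def)

lemma Fx_eq_phi: "0 < y \<Longrightarrow> y < 1 \<Longrightarrow> r y \<noteq> 0 \<Longrightarrow> Fx y c = q y * (c - phi y)"
  by (simp add: Fx_def phi_def q_eq_r field_simps)

lemma FC_eq_psi: "beta y \<noteq> 0 \<Longrightarrow> FC y c = - (1 - c) * beta y * (c - psi y)"
  by (simp add: FC_def psi_def field_simps)

lemma phi_increasing: "0 < a \<Longrightarrow> a \<le> b \<Longrightarrow> b < 1 \<Longrightarrow> r b > 0 \<Longrightarrow> phi a \<le> phi b"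
  unfolding phi_def using r_decreasing[of a b] dmu_nonneg by (simp add: divide_left_mono)

lemma psi_decreasing:
  assumes "D \<ge> 0" "0 \<le> a" "a \<le> b" "b \<le> 1"
  shows "psi b \<le> psi a"
proof -
  have "eta a * beta b - eta b * beta a = (b - a) * D"
    by (simp add: eta_def beta_def D_def dmu_def algebra_simps)
  moreover have "(b - a) * D \<ge> 0" using assms by simp
  ultimately have "eta b * beta a \<le> eta a * beta b" by simp
  then show ?thesis
    using assms beta_pos[of a] beta_pos[of b] by (simp add: psi_def divide_simps mult.commute)
qed

lemma FC_zero_imp_D:
  assumes "c * beta y = eta y"
  shows "(dmu - c * (aL + gLR - aR - gRL)) * beta y = - D"
proof -
  have "(dmu - c * (aL + gLR - aR - gRL)) * beta y
      = dmu * beta y - (aL + gLR - aR - gRL) * (c * beta y)"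
    by (simp add: algebra_simps)
  also have "\<dots> = - D" unfolding assms by (simp add: eta_def beta_def D_def dmu_def algebra_simps)
  finally show ?thesis .
qed

lemma Fx_zero_imp_phi: "Fx y c = 0 \<Longrightarrow> 0 < y \<Longrightarrow> y < 1 \<Longrightarrow> r y \<noteq> 0 \<Longrightarrow> c = phi y"
  by (simp add: Fx_eq_phi q_eq_r)

lemma FC_zero_imp_psi: "FC y c = 0 \<Longrightarrow> c < 1 \<Longrightarrow> beta y \<noteq> 0 \<Longrightarrow> c = psi y"
  by (simp add: FC_eq_psi)

lemma continuous_on_r: "S \<subseteq> {0<..<1} \<Longrightarrow> continuous_on S r"
  unfolding r_def[abs_def] by (intro continuous_intros) auto

lemma continuous_on_q: "continuous_on S q"
  unfolding q_def[abs_def] by (intro continuous_intros)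

lemma continuous_on_beta: "continuous_on S beta"
  unfolding beta_def[abs_def] by (intro continuous_intros)

lemma continuous_on_eta: "continuous_on S eta"
  unfolding eta_def[abs_def] by (intro continuous_intros)

lemma lyapunov_identity:
  assumes "0 < y" "y < 1" "r y \<noteq> 0" "q y \<noteq> 0" "beta y \<noteq> 0" "c < 1"
  shows "(c - c0) / (1 - c) * FC y c + beta y * (2 * phi y - psi y - c0) / q y * Fx y c
    = - beta y * ((c - phi y)^2 + (phi y - psi y) * (phi y - c0))"
  using assms by (simp add: Fx_eq_phi FC_eq_psi field_simps power2_eq_square)

lemma DERIV_Fx:
  assumes "(u has_real_derivative u') (at t)" "(v has_real_derivative v') (at t)"
  shows "((\<lambda>t. Fx (u t) (v t)) has_real_derivative Fx_dx (u t) (v t) * u' + q (u t) * v') (at t)"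
  unfolding Fx_def q_def
  by (rule derivative_eq_intros assms refl)+ (simp add: Fx_dx_def algebra_simps)

lemma DERIV_FC:
  assumes "(u has_real_derivative u') (at t)" "(v has_real_derivative v') (at t)"
  shows "((\<lambda>t. FC (u t) (v t)) has_real_derivative
      FC_dx (u t) (v t) * u' + FC_dC (u t) (v t) * v') (at t)"
  unfolding FC_def beta_def eta_def
  by (rule derivative_eq_intros assms refl)+
    (simp add: FC_dx_def FC_dC_def beta_def eta_def algebra_simps)

text \<open>Along a solution, the product of the two velocity components satisfies a linear
  equation whose forcing term is nonnegative as soon as the system is cooperative,
  i.e. \<open>q > 0\<close> and \<open>FC_dx > 0\<close>.\<close>
lemma DERIV_Fx_FC_product:
  assumes "(u has_real_derivative Fx (u t) (v t)) (at t)"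
    and "(v has_real_derivative FC (u t) (v t)) (at t)"
  shows "((\<lambda>t. Fx (u t) (v t) * FC (u t) (v t)) has_real_derivative
      (Fx_dx (u t) (v t) + FC_dC (u t) (v t)) * (Fx (u t) (v t) * FC (u t) (v t))
      + (q (u t) * (FC (u t) (v t))^2 + FC_dx (u t) (v t) * (Fx (u t) (v t))^2)) (at t)"
  using DERIV_mult[OF DERIV_Fx[OF assms] DERIV_FC[OF assms]]
  by (simp add: power2_eq_square algebra_simps)

lemma fieldL_fieldR_share:
  assumes "a + b \<noteq> 0"
  shows "(fieldL aL muL gRL a b * (a + b) - a * (fieldL aL muL gRL a b + fieldR aR muR gLR a b))
      / ((a + b) * (a + b)) = Fx (a / (a + b)) (1 - a - b)"
proof -
  define s y where "s = a + b" and "y = a / s"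
  have s: "s \<noteq> 0" using assms by (simp add: s_def)
  have a: "a = y * s" and b: "b = (1 - y) * s" using s by (auto simp: y_def s_def field_simps)
  have "fieldL aL muL gRL a b * s - a * (fieldL aL muL gRL a b + fieldR aR muR gLR a b)
      = s * s * Fx y (1 - s)"
    unfolding a b fieldL_def fieldR_def Fx_def q_def dmu_def
    by (simp add: algebra_simps power2_eq_square)
  then show ?thesis using s by (simp add: s_def y_def diff_diff_eq)
qed

lemma fieldL_fieldR_C:
  assumes "a + b \<noteq> 0"
  shows "- (fieldL aL muL gRL a b + fieldR aR muR gLR a b) = FC (a / (a + b)) (1 - a - b)"
proof -
  define s y where "s = a + b" and "y = a / s"
  have s: "s \<noteq> 0" using assms by (simp add: s_def)
  have a: "a = y * s" and b: "b = (1 - y) * s" using s by (auto simp: y_def s_def field_simps)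
  have "- (fieldL aL muL gRL a b + fieldR aR muR gLR a b) = FC y (1 - s)"
    unfolding a b fieldL_def fieldR_def FC_def beta_def eta_def dmu_def by (simp add: algebra_simps)
  then show ?thesis by (simp add: s_def y_def diff_diff_eq)
qed

end

section \<open>Periodic orbits of the reduced system are stationary\<close>

locale reduced_orbit = reduced_system +
  fixes x C :: "real \<Rightarrow> real" and T :: real
  assumes DERIV_x: "\<And>t. (x has_real_derivative Fx (x t) (C t)) (at t)"
    and DERIV_C: "\<And>t. (C has_real_derivative FC (x t) (C t)) (at t)"
    and period_pos: "T > 0"
    and x_periodic: "\<And>t. x (t + T) = x t" and C_periodic: "\<And>t. C (t + T) = C t"
    and x_pos: "\<And>t. 0 < x t" and x_less_1: "\<And>t. x t < 1"
    and C_pos: "\<And>t. 0 < C t" and C_less_1: "\<And>t. C t < 1"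
begin

lemma x_max:
  obtains tM where "\<And>t. x t \<le> x tM" "Fx (x tM) (C tM) = 0"
  using periodic_deriv_zero_at_max[of x T "\<lambda>t. Fx (x t) (C t)",
      OF x_periodic period_pos DERIV_x] by blast

lemma x_min:
  obtains tm where "\<And>t. x tm \<le> x t" "Fx (x tm) (C tm) = 0"
  using periodic_deriv_zero_at_min[of x T "\<lambda>t. Fx (x t) (C t)",
      OF x_periodic period_pos DERIV_x] by blast

lemma C_max:
  obtains sM where "\<And>t. C t \<le> C sM" "FC (x sM) (C sM) = 0"
  using periodic_deriv_zero_at_max[of C T "\<lambda>t. FC (x t) (C t)",
      OF C_periodic period_pos DERIV_C] by blast

lemma C_min:
  obtains sm where "\<And>t. C sm \<le> C t" "FC (x sm) (C sm) = 0"
  using periodic_deriv_zero_at_min[of C T "\<lambda>t. FC (x t) (C t)",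
      OF C_periodic period_pos DERIV_C] by blast

lemma stationary_if_dmu_zero:
  assumes "dmu = 0"
  shows "x t = x s \<and> C t = C s"
proof -
  obtain tm where xm: "\<And>t. x tm \<le> x t" and "Fx (x tm) (C tm) = 0" using x_min by blast
  moreover obtain tM where xM: "\<And>t. x t \<le> x tM" and "Fx (x tM) (C tM) = 0" using x_max by blast
  ultimately have "C tm * r (x tm) = 0" "C tM * r (x tM) = 0"
    using Fx_zero_imp x_pos x_less_1 assms by auto
  then have "r (x tm) = r (x tM)" using C_pos[of tm] C_pos[of tM] by simp
  then have "x tm = x tM"
    using r_strict_decreasing[OF x_pos _ x_less_1, of tm tM] xm[of tM] by fastforce
  then have x_const: "\<And>t. x t = x tM" using xm xM by (metis order_antisym)
  obtain sm where Cm: "\<And>t. C sm \<le> C t" and "FC (x sm) (C sm) = 0" using C_min by blast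
  moreover obtain sM where CM: "\<And>t. C t \<le> C sM" and "FC (x sM) (C sM) = 0" using C_max by blast
  ultimately have "C sm * beta (x tM) = C sM * beta (x tM)"
    using FC_zero_imp C_less_1 x_const by metis
  then have "C sm = C sM" using beta_pos[of "x tM"] x_pos[of tM] x_less_1[of tM] by simp
  then have "\<And>t. C t = C sM" using Cm CM by (metis order_antisym)
  with x_const show ?thesis by metis
qed

lemma stationary_if_Fx_vanishes:
  assumes "dmu > 0" "\<And>t. Fx (x t) (C t) = 0"
  shows "x t = x s \<and> C t = C s"
proof -
  have x_const: "x t = x s" for t s
    using DERIV_isconst_all[of x t s] DERIV_x assms(2) by metis
  have "C t * r (x t) = dmu" "C s * r (x t) = dmu"
    using Fx_zero_imp[OF assms(2) x_pos x_less_1] x_const by metis+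
  moreover have "r (x t) \<noteq> 0" using calculation(1) assms(1) by auto
  ultimately have "C t = C s" by (metis mult_cancel_right)
  with x_const show ?thesis by simp
qed

lemma r_pos_below_orbit:
  assumes "dmu > 0" "0 < y" "y \<le> x t"
  shows "r y > 0"
proof -
  obtain tM where xM: "\<And>t. x t \<le> x tM" and "Fx (x tM) (C tM) = 0" using x_max by blast
  then have "C tM * r (x tM) = dmu" using Fx_zero_imp x_pos x_less_1 by blast
  then have "r (x tM) > 0" using assms(1) C_pos[of tM] by (metis zero_less_mult_pos)
  then show ?thesis
    using r_decreasing[of y "x tM"] assms(2,3) xM[of t] x_less_1[of tM] by simp
qed

lemma stationary_if_cooperative:
  assumes "dmu > 0" "D < 0"
  shows "x t = x s \<and> C t = C s"
proof -
  have q_pos: "q (x t) > 0" for t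
    using r_pos_below_orbit[OF assms(1) x_pos order_refl] q_eq_r[OF x_pos x_less_1] x_pos x_less_1
    by simp
  define k where "k = aL + gLR - aR - gRL"
  have at_C_extremum: "dmu - C s * k > 0" if "FC (x s) (C s) = 0" for s
  proof -
    have "(dmu - C s * k) * beta (x s) = - D"
      unfolding k_def by (rule FC_zero_imp_D[OF FC_zero_imp[OF that C_less_1]])
    then have "(dmu - C s * k) * beta (x s) > 0" using assms(2) by simp
    moreover have "beta (x s) > 0" using beta_pos x_pos[of s] x_less_1[of s] by simp
    ultimately show ?thesis by (simp add: zero_less_mult_iff)
  qed
  have FC_dx_pos: "FC_dx (x t) (C t) > 0" for t
  proof -
    obtain sm where "C sm \<le> C t" "FC (x sm) (C sm) = 0" using C_min by blast
    moreover obtain sM where "C t \<le> C sM" "FC (x sM) (C sM) = 0" using C_max by blast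
    text \<open>\<open>dmu - c k\<close> is affine in \<open>c\<close>, so its positivity at the extreme values of \<open>C\<close>
      propagates to all values of \<open>C\<close>.\<close>
    moreover have "C t * k \<le> C sm * k \<or> C t * k \<le> C sM * k"
      using \<open>C sm \<le> C t\<close> \<open>C t \<le> C sM\<close>
      by (cases "k \<ge> 0") (simp_all add: mult_right_mono mult_right_mono_neg)
    ultimately have "dmu - C t * k > 0"
      using at_C_extremum[of sm] at_C_extremum[of sM] by linarith
    then show ?thesis using C_less_1[of t] by (simp add: FC_dx_def k_def)
  qed
  define P where "P t = Fx (x t) (C t) * FC (x t) (C t)" for t
  define g where "g t = Fx_dx (x t) (C t) + FC_dC (x t) (C t)" for t
  define Q where "Q t = q (x t) * (FC (x t) (C t))^2 + FC_dx (x t) (C t) * (Fx (x t) (C t))^2" for t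
  have DERIV_P: "(P has_real_derivative g t * P t + Q t) (at t)" for t
    unfolding P_def g_def Q_def by (rule DERIV_Fx_FC_product[OF DERIV_x DERIV_C])
  have Q_nonneg: "Q t \<ge> 0" for t
    unfolding Q_def using q_pos[of t] FC_dx_pos[of t] by simp
  have "continuous_on UNIV g"
    using DERIV_isCont[OF DERIV_x] DERIV_isCont[OF DERIV_C]
    unfolding g_def Fx_dx_def FC_dC_def beta_def eta_def
    by (intro continuous_at_imp_continuous_on ballI continuous_intros) auto
  moreover obtain tM where "Fx (x tM) (C tM) = 0" using x_max by blast
  ultimately have P_zero: "P t = 0" for t
    using periodic_linear_ode_nonneg_forcing_zero[of P T tM g Q] DERIV_P Q_nonneg period_pos
      x_periodic C_periodic by (simp add: P_def)
  have P_const: "P = (\<lambda>_. 0)" using P_zero by auto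
  have Q_zero: "Q t = 0" for t
  proof -
    have "((\<lambda>_. 0) has_real_derivative Q t) (at t)" using DERIV_P[of t] by (simp add: P_const)
    from DERIV_unique[OF this DERIV_const] show ?thesis .
  qed
  have "Fx (x t) (C t) = 0" for t
  proof -
    have "q (x t) * (FC (x t) (C t))^2 \<ge> 0" "FC_dx (x t) (C t) * (Fx (x t) (C t))^2 \<ge> 0"
      using q_pos[of t] FC_dx_pos[of t] by simp_all
    then have "FC_dx (x t) (C t) * (Fx (x t) (C t))^2 = 0"
      using Q_zero[of t] unfolding Q_def by linarith
    then show ?thesis using FC_dx_pos[of t] by simp
  qed
  then show ?thesis using stationary_if_Fx_vanishes assms(1) by blast
qed

lemma between_orbit_extrema:
  assumes "dmu > 0" "y \<in> {x tm..x tM}"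
  shows "0 < y" "y < 1" "r y > 0" "q y > 0" "beta y > 0"
proof -
  show "0 < y" "y < 1" using assms(2) x_pos[of tm] x_less_1[of tM] by auto
  moreover show "r y > 0" using r_pos_below_orbit[OF assms(1) \<open>0 < y\<close>, of tM] assms(2) by simp
  ultimately show "q y > 0" "beta y > 0" using q_eq_r[of y] beta_pos[of y] by simp_all
qed

lemma phi_psi_crossing:
  assumes "dmu > 0" "D \<ge> 0"
    and xm: "\<And>t. x tm \<le> x t" "Fx (x tm) (C tm) = 0"
    and xM: "\<And>t. x t \<le> x tM" "Fx (x tM) (C tM) = 0"
  obtains c0 where "\<And>y. y \<in> {x tm..x tM} \<Longrightarrow> (phi y - psi y) * (phi y - c0) \<ge> 0"
proof (rule crossing_of_mono_antimono)
  let ?I = "{x tm..x tM}"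
  note in_range = between_orbit_extrema[OF assms(1), of _ tm tM]
  show "x tm \<le> x tM" using xm(1) .
  show "continuous_on ?I phi"
    unfolding phi_def[abs_def] using in_range(1,2,3)
    by (intro continuous_intros continuous_on_r) (auto simp: less_imp_neq[symmetric])
  show "continuous_on ?I psi"
    unfolding psi_def[abs_def] using in_range(5)
    by (intro continuous_on_divide continuous_on_beta continuous_on_eta)
      (auto simp: less_imp_neq[symmetric])
  show "phi u \<le> phi v" if "x tm \<le> u" "u \<le> v" "v \<le> x tM" for u v
  proof -
    have "u \<in> ?I" "v \<in> ?I" using that by auto
    then show ?thesis
      using phi_increasing[of u v] in_range(1)[of u] in_range(2,3)[of v] that(2) by simp
  qed
  show "psi v \<le> psi u" if "x tm \<le> u" "u \<le> v" "v \<le> x tM" for u v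
  proof -
    have "u \<in> ?I" "v \<in> ?I" using that by auto
    then show ?thesis
      using psi_decreasing[OF assms(2), of u v] in_range(1)[of u] in_range(2)[of v] that(2) by simp
  qed
  have phi_at: "phi (x s) = C s" if "Fx (x s) (C s) = 0" for s
    using Fx_zero_imp_phi[OF that x_pos x_less_1] in_range(3)[of "x s"] xm(1) xM(1) by force
  have psi_at: "psi (x s) = C s" if "FC (x s) (C s) = 0" for s
    using FC_zero_imp_psi[OF that C_less_1] beta_pos[of "x s"] x_pos[of s] x_less_1[of s] by simp
  obtain sm where "\<And>t. C sm \<le> C t" "FC (x sm) (C sm) = 0" using C_min by blast
  moreover obtain sM where "\<And>t. C t \<le> C sM" "FC (x sM) (C sM) = 0" using C_max by blast
  moreover have "psi (x sM) \<le> psi (x tm)" "psi (x tM) \<le> psi (x sm)"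
    using psi_decreasing[OF assms(2)] x_pos x_less_1 xm(1) xM(1) by (simp_all add: less_imp_le)
  ultimately show "phi (x tm) \<le> psi (x tm)" "psi (x tM) \<le> phi (x tM)"
    using phi_at[OF xm(2)] phi_at[OF xM(2)] psi_at by (metis order_trans)+
qed (rule that)

lemma stationary_if_D_nonneg:
  assumes "dmu > 0" "D \<ge> 0"
  shows "x t = x s \<and> C t = C s"
proof -
  obtain tm where xm: "\<And>t. x tm \<le> x t" "Fx (x tm) (C tm) = 0" using x_min by blast
  obtain tM where xM: "\<And>t. x t \<le> x tM" "Fx (x tM) (C tM) = 0" using x_max by blast
  let ?I = "{x tm..x tM}"
  obtain c0 where sign: "\<And>y. y \<in> ?I \<Longrightarrow> (phi y - psi y) * (phi y - c0) \<ge> 0"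
    using phi_psi_crossing[OF assms xm xM] by blast
  note in_range = between_orbit_extrema[OF assms(1), of _ tm tM]
  have x_in: "x t \<in> ?I" for t using xm(1) xM(1) by simp
  text \<open>The Lyapunov function \<open>V\<close> is built so that \<open>V'\<close> is the expression of
    \<open>lyapunov_identity\<close>, which is \<open>\<le> 0\<close> by the choice of \<open>c0\<close>.\<close>
  define m where "m y = beta y * (2 * phi y - psi y - c0) / q y" for y
  define V where "V t = - C t - (1 - c0) * ln (1 - C t) + integral {x tm..x t} m" for t
  define V' where
    "V' t = - beta (x t) * ((C t - phi (x t))^2 + (phi (x t) - psi (x t)) * (phi (x t) - c0))" for t
  have "continuous_on ?I m"
    unfolding m_def[abs_def] phi_def[abs_def] psi_def[abs_def] using in_range
    by (intro continuous_intros continuous_on_r continuous_on_q continuous_on_beta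
        continuous_on_eta)
      (auto simp: less_imp_neq[symmetric])
  note DERIV_m = DERIV_integral_comp[OF this x_in DERIV_x]
  have DERIV_V: "(V has_real_derivative V' t) (at t)" for t
  proof -
    have "((\<lambda>t. 1 - C t) has_real_derivative 0 - FC (x t) (C t)) (at t)"
      by (rule DERIV_diff[OF DERIV_const DERIV_C])
    then have "((\<lambda>t. ln (1 - C t)) has_real_derivative
        inverse (1 - C t) * (0 - FC (x t) (C t))) (at t)"
      using C_less_1[of t] by (intro DERIV_chain2[OF DERIV_ln]) auto
    then have "(V has_real_derivative
        - FC (x t) (C t) - (1 - c0) * (inverse (1 - C t) * (0 - FC (x t) (C t)))
        + m (x t) * Fx (x t) (C t)) (at t)"
      unfolding V_def[abs_def]
      by (intro DERIV_add DERIV_diff DERIV_minus DERIV_cmult DERIV_C DERIV_m)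
    moreover have "- FC (x t) (C t) - (1 - c0) * (inverse (1 - C t) * (0 - FC (x t) (C t)))
        = (C t - c0) / (1 - C t) * FC (x t) (C t)"
      using C_less_1[of t] by (simp add: field_simps)
    moreover have "(C t - c0) / (1 - C t) * FC (x t) (C t) + m (x t) * Fx (x t) (C t) = V' t"
      unfolding V'_def m_def using in_range[OF x_in[of t]] C_less_1[of t]
      by (intro lyapunov_identity) auto
    ultimately show ?thesis by simp
  qed
  have V'_nonpos: "V' t \<le> 0" for t
    using in_range(5)[OF x_in[of t]] sign[OF x_in[of t]] unfolding V'_def
    by (intro mult_nonpos_nonneg add_nonneg_nonneg) simp_all
  have V_periodic: "V (t + T) = V t" for t by (simp add: V_def x_periodic C_periodic)
  have V'_zero: "V' t = 0" for t
    by (rule periodic_deriv_nonpos_imp_deriv_zero[of V T V',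
          OF V_periodic period_pos DERIV_V V'_nonpos])
  have "Fx (x t) (C t) = 0" for t
  proof -
    have "(C t - phi (x t))^2 + (phi (x t) - psi (x t)) * (phi (x t) - c0) = 0"
      using V'_zero[of t] in_range(5)[OF x_in[of t]] by (simp add: V'_def)
    then have "(C t - phi (x t))^2 = 0"
      using sign[OF x_in[of t]] zero_le_power2[of "C t - phi (x t)"] by linarith
    then have "C t = phi (x t)" by simp
    then show ?thesis using Fx_eq_phi in_range(1,2,3)[OF x_in[of t]] by simp
  qed
  then show ?thesis using stationary_if_Fx_vanishes assms(1) by blast
qed

lemma stationary: "x t = x s \<and> C t = C s"
proof (cases "dmu = 0")
  case True
  then show ?thesis by (rule stationary_if_dmu_zero)
next
  case False
  then have "dmu > 0" using dmu_nonneg by simp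
  show ?thesis
  proof (cases "D < 0")
    case True
    with \<open>dmu > 0\<close> show ?thesis by (rule stationary_if_cooperative)
  next
    case False
    with \<open>dmu > 0\<close> show ?thesis by (intro stationary_if_D_nonneg) simp_all
  qed
qed

end

lemma closed_orbit_in_interior_swap:
  "closed_orbit_in_interior aL aR muL muR gRL gLR L R \<longleftrightarrow>
    closed_orbit_in_interior aR aL muR muL gLR gRL R L"
proof -
  have "fieldR aR muR gLR l r = fieldL aR muR gLR r l"
    and "fieldL aL muL gRL l r = fieldR aL muL gRL r l" for l r
    by (simp_all add: fieldL_def fieldR_def algebra_simps)
  then show ?thesis
    unfolding closed_orbit_in_interior_def in_simplex_interior_def by (auto simp: add.commute)
qed

lemma (in reduced_system) no_closed_orbit_in_interior:
  "\<not> closed_orbit_in_interior aL aR muL muR gRL gLR L R"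
proof
  assume "closed_orbit_in_interior aL aR muL muR gRL gLR L R"
  then obtain T where DERIV_L: "\<And>t. (L has_real_derivative fieldL aL muL gRL (L t) (R t)) (at t)"
    and DERIV_R: "\<And>t. (R has_real_derivative fieldR aR muR gLR (L t) (R t)) (at t)"
    and T: "T > 0" "\<And>t. L (t + T) = L t" "\<And>t. R (t + T) = R t"
    and nonconst: "\<exists>t1 t2. (L t1, R t1) \<noteq> (L t2, R t2)"
    and interior: "\<And>t. 0 < L t" "\<And>t. 0 < R t" "\<And>t. L t + R t < 1"
    unfolding closed_orbit_in_interior_def in_simplex_interior_def by blast
  define x where "x t = L t / (L t + R t)" for t
  define C where "C t = 1 - L t - R t" for t
  have sum_nz: "L t + R t \<noteq> 0" for t using interior(1,2)[of t] by simp
  have "(x has_real_derivative Fx (x t) (C t)) (at t)" for t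
  proof -
    have "(x has_real_derivative (fieldL aL muL gRL (L t) (R t) * (L t + R t)
        - L t * (fieldL aL muL gRL (L t) (R t) + fieldR aR muR gLR (L t) (R t)))
        / ((L t + R t) * (L t + R t))) (at t)"
      unfolding x_def[abs_def]
      by (rule DERIV_divide[OF DERIV_L DERIV_add[OF DERIV_L DERIV_R] sum_nz])
    then show ?thesis unfolding fieldL_fieldR_share[OF sum_nz] x_def C_def .
  qed
  moreover have "(C has_real_derivative FC (x t) (C t)) (at t)" for t
  proof -
    have "(C has_real_derivative
        0 - fieldL aL muL gRL (L t) (R t) - fieldR aR muR gLR (L t) (R t)) (at t)"
      unfolding C_def[abs_def] by (intro DERIV_diff DERIV_const DERIV_L DERIV_R)
    then show ?thesis using fieldL_fieldR_C[OF sum_nz] by (simp add: x_def C_def)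
  qed
  moreover have "0 < x t" "x t < 1" "0 < C t" "C t < 1" for t
    using interior[of t] by (auto simp: x_def C_def field_simps)
  ultimately interpret reduced_orbit aL aR muL muR gRL gLR x C T
    using T by unfold_locales (auto simp: x_def C_def)
  have "L t = x t * (1 - C t)" "R t = (1 - x t) * (1 - C t)" for t
    using sum_nz[of t] by (auto simp: x_def C_def field_simps)
  then have "(L t1, R t1) = (L t2, R t2)" for t1 t2 using stationary[of t1 t2] by simp
  with nonconst show False by blast
qed

theorem corollary3p10:
  fixes aL aR muL muR gRL gLR :: real
  assumes "aL > 0" "aR > 0" "muL > 0" "muR > 0" "gRL > 0" "gLR > 0"
  shows "\<not> (\<exists>L R. closed_orbit_in_interior aL aR muL muR gRL gLR L R)"
proof
  assume "\<exists>L R. closed_orbit_in_interior aL aR muL muR gRL gLR L R"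
  then obtain L R where orbit: "closed_orbit_in_interior aL aR muL muR gRL gLR L R" by blast
  show False
  proof (cases "muR \<le> muL")
    case True
    then interpret reduced_system aL aR muL muR gRL gLR using assms by unfold_locales
    show False using no_closed_orbit_in_interior orbit by blast
  next
    case False
    then interpret reduced_system aR aL muR muL gLR gRL using assms by unfold_locales simp_all
    show False using no_closed_orbit_in_interior orbit closed_orbit_in_interior_swap by blast
  qed
qed

end
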